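(* Let $G^\sigma$ be a lower-optimal oriented graph and let $x$ be a vertex lying on a cycle of $G$. Then (i) $sr(G^\sigma)=sr(G^\sigma-x)$; (ii) $\alpha(G)=\alpha(G-x)$; (iii) $d(G)=d(G-x)+1$; (iv) $G^\sigma-x$ is lower-optimal; (v) $x$ lies on exactly one cycle of $G$, and $x$ is not a quasi-pendant vertex of $G$.
   Context: An oriented graph $G^\sigma$ is obtained from a simple graph $G$ by assigning a direction to each edge. Its skew-adjacency matrix $S(G^\sigma)=[s_{x,y}]$ has $s_{x,y}=1$ if there is an arc from $x$ to $y$, $s_{x,y}=-1$ if there is an arc from $y$ to $x$, and $0$ otherwise; $sr(G^\sigma)$ is the rank of $S(G^\sigma)$. $\alpha(G)$ is the independence number. $d(G)=|E_G|-|V_G|+\omega(G)$, with $\omega(G)$ the number of components. For every oriented graph one has $sr(G^\sigma)+2\alpha(G)\geqslant 2|V_G|-2d(G)$, and $G^\sigma$ is called lower-optimal if equality holds. $G^\sigma-x$ is obtained by deleting $x$ and its incident arcs. A pendant vertex has degree one; a quasi-pendant vertex is a vertex adjacent to a pendant vertex. *)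

theory Defs
  imports "Jordan_Normal_Form.DL_Rank"
begin

text \<open>The underlying simple graph G has
  vertex set V and an edge {u,v} whenever (u,v) or (v,u) is an arc.\<close>

definition oriented_graph :: "'a set \<Rightarrow> ('a \<times> 'a) set \<Rightarrow> bool" where
  "oriented_graph V A \<longleftrightarrow> finite V \<and> A \<subseteq> V \<times> V \<and>
     (\<forall>u. (u,u) \<notin> A) \<and> (\<forall>u v. (u,v) \<in> A \<longrightarrow> (v,u) \<notin> A)"

definition adj :: "('a \<times> 'a) set \<Rightarrow> 'a \<Rightarrow> 'a \<Rightarrow> bool" where
  "adj A u v \<longleftrightarrow> (u,v) \<in> A \<or> (v,u) \<in> A"

definition edges :: "('a \<times> 'a) set \<Rightarrow> 'a set set" where
  "edges A = {{u,v} | u v. (u,v) \<in> A}"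

definition skew_entry :: "('a \<times> 'a) set \<Rightarrow> 'a \<Rightarrow> 'a \<Rightarrow> real" where
  "skew_entry A x y = (if (x,y) \<in> A then 1 else if (y,x) \<in> A then -1 else 0)"

definition vertex_list :: "'a set \<Rightarrow> 'a list" where
  "vertex_list V = (SOME vs. distinct vs \<and> set vs = V)"

text \<open>Skew-adjacency matrix with respect to a fixed enumeration of V (the rank does not
  depend on the enumeration).\<close>
definition skew_adj_matrix :: "'a set \<Rightarrow> ('a \<times> 'a) set \<Rightarrow> real mat" where
  "skew_adj_matrix V A = (let vs = vertex_list V in
     mat (length vs) (length vs) (\<lambda>(i,j). skew_entry A (vs ! i) (vs ! j)))"

definition skew_rank :: "'a set \<Rightarrow> ('a \<times> 'a) set \<Rightarrow> nat" where
  "skew_rank V A = vec_space.rank (card V) (skew_adj_matrix V A)"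

definition independent_set :: "'a set \<Rightarrow> ('a \<times> 'a) set \<Rightarrow> 'a set \<Rightarrow> bool" where
  "independent_set V A S \<longleftrightarrow> S \<subseteq> V \<and> (\<forall>u\<in>S. \<forall>v\<in>S. \<not> adj A u v)"

definition independence_number :: "'a set \<Rightarrow> ('a \<times> 'a) set \<Rightarrow> nat" where
  "independence_number V A = Max (card ` {S. independent_set V A S})"

definition components_rel :: "'a set \<Rightarrow> ('a \<times> 'a) set \<Rightarrow> ('a \<times> 'a) set" where
  "components_rel V A = ({(u,v). u \<in> V \<and> v \<in> V \<and> adj A u v})\<^sup>* \<inter> (V \<times> V)"

definition omega :: "'a set \<Rightarrow> ('a \<times> 'a) set \<Rightarrow> nat" where
  "omega V A = card (V // components_rel V A)"

definition dim_d :: "'a set \<Rightarrow> ('a \<times> 'a) set \<Rightarrow> int" where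
  "dim_d V A = int (card (edges A)) - int (card V) + int (omega V A)"

definition lower_optimal :: "'a set \<Rightarrow> ('a \<times> 'a) set \<Rightarrow> bool" where
  "lower_optimal V A \<longleftrightarrow>
     int (skew_rank V A) + 2 * int (independence_number V A) = 2 * int (card V) - 2 * dim_d V A"

definition del_vertex_V :: "'a set \<Rightarrow> 'a \<Rightarrow> 'a set" where
  "del_vertex_V V x = V - {x}"

definition del_vertex_A :: "('a \<times> 'a) set \<Rightarrow> 'a \<Rightarrow> ('a \<times> 'a) set" where
  "del_vertex_A A x = {(u,v) \<in> A. u \<noteq> x \<and> v \<noteq> x}"

text \<open>A cycle of G, identified with its edge set: the edges of a closed walk
  v_0 v_1 ... v_{k-1} v_0 through k >= 3 distinct vertices.\<close>
definition is_cycle :: "'a set \<Rightarrow> ('a \<times> 'a) set \<Rightarrow> 'a set set \<Rightarrow> bool" where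
  "is_cycle V A C \<longleftrightarrow> (\<exists>vs. length vs \<ge> 3 \<and> distinct vs \<and> set vs \<subseteq> V \<and>
     (\<forall>i < length vs. adj A (vs ! i) (vs ! ((i + 1) mod length vs))) \<and>
     C = {{vs ! i, vs ! ((i + 1) mod length vs)} | i. i < length vs})"

definition on_cycle :: "'a \<Rightarrow> 'a set set \<Rightarrow> bool" where
  "on_cycle x C \<longleftrightarrow> x \<in> \<Union> C"

definition degree :: "'a set \<Rightarrow> ('a \<times> 'a) set \<Rightarrow> 'a \<Rightarrow> nat" where
  "degree V A v = card {u \<in> V. adj A v u}"

definition pendant :: "'a set \<Rightarrow> ('a \<times> 'a) set \<Rightarrow> 'a \<Rightarrow> bool" where
  "pendant V A v \<longleftrightarrow> v \<in> V \<and> degree V A v = 1"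

definition quasi_pendant :: "'a set \<Rightarrow> ('a \<times> 'a) set \<Rightarrow> 'a \<Rightarrow> bool" where
  "quasi_pendant V A v \<longleftrightarrow> v \<in> V \<and> (\<exists>u\<in>V. adj A v u \<and> pendant V A u)"

end

theory Submission
  imports Defs
begin

text \<open>
  Deleting a vertex x lowers d by deg x - k, where k is the number of components of G - x that
  contain a neighbour of x; so d drops exactly when two neighbours of x are joined in G - x, i.e.
  when x lies on a cycle. The slack sr + 2 alpha - 2|V| + 2d of an induced subgraph is nonnegative
  by induction on its order: removing a cycle vertex, an isolated vertex, or a pendant vertex
  together with its neighbour never increases the slack, and a nonempty graph without such
  vertices has minimum degree 2 and hence a cycle vertex.

  For lower-optimal G the slack is 0, so deleting a vertex x on a cycle is tight: sr and alpha
  are unchanged and k = deg x - 1, i.e. exactly one pair of neighbours of x is joined in G - x.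
  At every vertex of a cycle the two cycle neighbours form this unique pair, so a second cycle
  through x would have to follow the first one step by step. A pendant neighbour u of x is
  impossible: u is isolated in G - x, while removing both ends of the pendant edge ux lowers the
  rank by 2, so sr would drop by 2 upon deleting x.
\<close>

section \<open>Rank of principal submatrices\<close>

definition indep_cols :: "('r \<Rightarrow> 'c \<Rightarrow> 'b::field) \<Rightarrow> 'r set \<Rightarrow> 'c set \<Rightarrow> bool" where
  "indep_cols s R J \<longleftrightarrow> (\<forall>c. (\<forall>i\<in>R. (\<Sum>j\<in>J. c j * s i j) = 0) \<longrightarrow> (\<forall>j\<in>J. c j = 0))"

definition principal_rank :: "('a \<Rightarrow> 'a \<Rightarrow> 'b::field) \<Rightarrow> 'a set \<Rightarrow> nat" where
  "principal_rank s W = Max (card ` {J. J \<subseteq> W \<and> indep_cols s W J})"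

lemma indep_cols_empty: "indep_cols s R {}"
  unfolding indep_cols_def by simp

lemma indep_colsD:
  "indep_cols s R J \<Longrightarrow> (\<And>i. i \<in> R \<Longrightarrow> (\<Sum>j\<in>J. c j * s i j) = 0) \<Longrightarrow> j \<in> J \<Longrightarrow> c j = 0"
  unfolding indep_cols_def by blast

lemma indep_cols_mono_rows: "indep_cols s R J \<Longrightarrow> R \<subseteq> R' \<Longrightarrow> indep_cols s R' J"
  unfolding indep_cols_def by blast

lemma finite_indep_cols_subsets: "finite W \<Longrightarrow> finite {J. J \<subseteq> W \<and> indep_cols s W J}"
  by (rule finite_subset[of _ "Pow W"]) auto

lemma card_le_principal_rank:
  "finite W \<Longrightarrow> J \<subseteq> W \<Longrightarrow> indep_cols s W J \<Longrightarrow> card J \<le> principal_rank s W"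
  unfolding principal_rank_def by (rule Max_ge) (auto intro: finite_indep_cols_subsets)

lemma principal_rank_witness:
  assumes "finite W"
  obtains J where "J \<subseteq> W" "indep_cols s W J" "card J = principal_rank s W"
proof -
  have "principal_rank s W \<in> card ` {J. J \<subseteq> W \<and> indep_cols s W J}"
    unfolding principal_rank_def
    by (rule Max_in) (auto intro: finite_indep_cols_subsets[OF assms] indep_cols_empty)
  then show ?thesis using that by auto
qed

context vec_space
begin

lemma lincomb_image_vec:
  fixes s :: "'r \<Rightarrow> 'c \<Rightarrow> 'a" and ls :: "'r list"
  defines "v \<equiv> \<lambda>j. vec n (\<lambda>p. s (ls ! p) j)"
  assumes "finite J" and "inj_on v J"
  shows "lincomb a (v ` J) = vec n (\<lambda>p. \<Sum>j\<in>J. a (v j) * s (ls ! p) j)"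
proof -
  have carr: "v ` J \<subseteq> carrier_vec n" unfolding v_def by auto
  show ?thesis
  proof (rule eq_vecI)
    fix p assume "p < dim_vec (vec n (\<lambda>p. \<Sum>j\<in>J. a (v j) * s (ls ! p) j))"
    then have p: "p < n" by simp
    have "lincomb a (v ` J) $ p = (\<Sum>w\<in>v ` J. a w * w $ p)" by (rule lincomb_index[OF p carr])
    also have "\<dots> = (\<Sum>j\<in>J. a (v j) * s (ls ! p) j)"
      unfolding sum.reindex[OF assms(3)] o_def using p by (simp add: v_def)
    finally show "lincomb a (v ` J) $ p = vec n (\<lambda>p. \<Sum>j\<in>J. a (v j) * s (ls ! p) j) $ p"
      using p by simp
  qed (use lincomb_dim[OF finite_imageI[OF assms(2)] carr] in simp)
qed

lemma lin_indpt_if_indep_cols: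
  fixes s :: "'r \<Rightarrow> 'c \<Rightarrow> 'a" and ls :: "'r list"
  defines "v \<equiv> \<lambda>j. vec n (\<lambda>p. s (ls ! p) j)"
  assumes rows: "set ls = R" "length ls = n" and fin: "finite J" and indep: "indep_cols s R J"
  shows "inj_on v J" and "lin_indpt (v ` J)"
proof -
  have rows_sum: "(\<forall>i\<in>R. f i = 0) \<longleftrightarrow> vec n (\<lambda>p. f (ls ! p)) = 0\<^sub>v n" for f :: "'r \<Rightarrow> 'a"
    using rows by (fastforce simp: vec_eq_iff in_set_conv_nth)
  show inj: "inj_on v J"
  proof (rule inj_onI, rule ccontr)
    fix j1 j2 assume j: "j1 \<in> J" "j2 \<in> J" "v j1 = v j2" "j1 \<noteq> j2"
    define c where "c j = (if j = j1 then 1 else if j = j2 then -1 else (0::'a))" for j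
    have "(\<Sum>j\<in>J. c j * s i j) = (\<Sum>j\<in>{j1,j2}. c j * s i j)" for i
      by (rule sum.mono_neutral_right) (use fin j in \<open>auto simp: c_def\<close>)
    then have "(\<Sum>j\<in>J. c j * s i j) = s i j1 - s i j2" for i
      using j(4) by (simp add: c_def)
    then have "\<forall>i\<in>R. (\<Sum>j\<in>J. c j * s i j) = 0"
      using rows_sum[of "\<lambda>i. s i j1 - s i j2"] j(3) by (auto simp: v_def vec_eq_iff)
    then have "c j1 = 0" using indep_colsD[OF indep _ j(1)] by blast
    then show False by (simp add: c_def)
  qed
  show "lin_indpt (v ` J)"
  proof (rule finite_lin_indpt2)
    fix a assume "lincomb a (v ` J) = 0\<^sub>v n"
    then have "\<forall>i\<in>R. (\<Sum>j\<in>J. a (v j) * s i j) = 0"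
      using rows_sum lincomb_image_vec[OF fin inj[unfolded v_def], of a] by (simp add: v_def)
    then have "\<forall>j\<in>J. a (v j) = 0"
      using indep_colsD[OF indep, of "\<lambda>j. a (v j)"] by blast
    then show "\<forall>w\<in>v ` J. a w = 0" by blast
  qed (auto simp: fin v_def)
qed

lemma indep_cols_if_lin_indpt:
  fixes s :: "'r \<Rightarrow> 'c \<Rightarrow> 'a" and ls :: "'r list"
  defines "v \<equiv> \<lambda>j. vec n (\<lambda>p. s (ls ! p) j)"
  assumes rows: "set ls = R" "length ls = n" and fin: "finite J"
    and inj: "inj_on v J" and li: "lin_indpt (v ` J)"
  shows "indep_cols s R J"
  unfolding indep_cols_def
proof (intro allI impI)
  fix c assume c: "\<forall>i\<in>R. (\<Sum>j\<in>J. c j * s i j) = 0"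
  define a where "a = c \<circ> the_inv_into J v"
  have "lincomb a (v ` J) = vec n (\<lambda>p. \<Sum>j\<in>J. c j * s (ls ! p) j)"
    using lincomb_image_vec[OF fin inj[unfolded v_def], of a] the_inv_into_f_f[OF inj]
    by (simp add: a_def v_def)
  also have "\<dots> = 0\<^sub>v n"
    using c rows by (auto simp: vec_eq_iff)
  finally have "lincomb a (v ` J) = 0\<^sub>v n" .
  then have "\<forall>w\<in>v ` J. a w = 0"
    using not_lindepD[OF li finite_imageI[OF fin] subset_refl] by (auto simp: v_def)
  then show "\<forall>j\<in>J. c j = 0" by (auto simp: a_def the_inv_into_f_f[OF inj])
qed

lemma rank_mat_eq_principal_rank:
  fixes s :: "'r \<Rightarrow> 'r \<Rightarrow> 'a"
  assumes ls: "distinct ls" "set ls = W" "length ls = n"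
  shows "rank (mat n n (\<lambda>(i,j). s (ls ! i) (ls ! j))) = principal_rank s W"
proof -
  define v where "v = (\<lambda>j. vec n (\<lambda>p. s (ls ! p) j))"
  let ?B = "mat n n (\<lambda>(i,j). s (ls ! i) (ls ! j))"
  have B: "?B \<in> carrier_mat n n" by simp
  have W: "(!) ls ` {..<n} = W" using ls(2,3) by (metis atLeast_upt set_map map_nth)
  have "set (cols ?B) = (\<lambda>k. v (ls ! k)) ` {..<n}"
    unfolding cols_def by (auto simp: v_def)
  also have "\<dots> = v ` W" unfolding W[symmetric] by (simp only: image_image)
  finally have cols: "set (cols ?B) = v ` W" .
  have finW: "finite W" using ls(2) by auto
  show ?thesis
  proof (rule antisym)
    have "lin_indpt {}" unfolding lin_dep_def by auto
    then obtain S where S: "finite S" "maximal S (\<lambda>T. T \<subseteq> set (cols ?B) \<and> lin_indpt T)"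
      using maximal_exists_superset[of "set (cols ?B)" "\<lambda>T. T \<subseteq> set (cols ?B) \<and> lin_indpt T" "{}"]
      by auto
    then have "S \<subseteq> v ` W" and li: "lin_indpt S" using cols unfolding maximal_def by auto
    then obtain J where J: "J \<subseteq> W" "inj_on v J" "S = v ` J"
      unfolding subset_image_inj by blast
    have "indep_cols s W J"
      using indep_cols_if_lin_indpt[OF ls(2,3) finite_subset[OF J(1) finW]] J(2,3) li
      by (simp add: v_def)
    then have "card J \<le> principal_rank s W" by (rule card_le_principal_rank[OF finW J(1)])
    then show "rank ?B \<le> principal_rank s W"
      using rank_card_indpt[OF B S(2)] card_image[OF J(2)] J(3) by simp
  next
    obtain J where J: "J \<subseteq> W" "indep_cols s W J" "card J = principal_rank s W"
      using principal_rank_witness[OF finW] .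
    then have inj: "inj_on v J" and li: "lin_indpt (v ` J)"
      using lin_indpt_if_indep_cols[OF ls(2,3) finite_subset[OF J(1) finW]] by (simp_all add: v_def)
    have "card (v ` J) \<le> rank ?B"
      by (rule rank_ge_card_indpt[OF B _ li]) (use cols J(1) in auto)
    then show "principal_rank s W \<le> rank ?B" using card_image[OF inj] J(3) by simp
  qed
qed

end

lemma vertex_list_distinct_set: "finite V \<Longrightarrow> distinct (vertex_list V) \<and> set (vertex_list V) = V"
  unfolding vertex_list_def by (rule someI_ex) (use finite_distinct_list in blast)

lemma skew_rank_eq_principal_rank:
  assumes "finite W"
  shows "skew_rank W A = principal_rank (skew_entry A) W"
proof -
  have vs: "distinct (vertex_list W)" "set (vertex_list W) = W" using vertex_list_distinct_set[OF assms] by auto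
  then have len: "length (vertex_list W) = card W" using distinct_card by metis
  show ?thesis
    using vec_space.rank_mat_eq_principal_rank[OF vs len] by (simp add: skew_rank_def skew_adj_matrix_def Let_def len)
qed

lemma principal_rank_cong:
  "(\<And>i j. i \<in> W \<Longrightarrow> j \<in> W \<Longrightarrow> s i j = t i j) \<Longrightarrow> principal_rank s W = principal_rank t W"
  unfolding principal_rank_def indep_cols_def
  by (intro arg_cong[where f = "\<lambda>X. Max (card ` X)"] Collect_cong conj_cong refl)
     (auto cong: sum.cong simp: subset_iff)

lemma principal_rank_Diff_le:
  assumes "finite W"
  shows "principal_rank s (W - {x}) \<le> principal_rank s W"
proof -
  obtain J where J: "J \<subseteq> W - {x}" "indep_cols s (W - {x}) J" "card J = principal_rank s (W - {x})"
    using principal_rank_witness[of "W - {x}"] assms by blast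
  have "indep_cols s W J" using indep_cols_mono_rows[OF J(2)] by blast
  then show ?thesis using card_le_principal_rank[OF assms, of J] J by auto
qed

lemma principal_rank_Diff_isolated:
  fixes s :: "'a \<Rightarrow> 'a \<Rightarrow> 'b::field"
  assumes fin: "finite W" and y: "y \<in> W"
    and row: "\<And>j. j \<in> W \<Longrightarrow> s y j = 0" and col: "\<And>i. i \<in> W \<Longrightarrow> s i y = 0"
  shows "principal_rank s (W - {y}) = principal_rank s W"
proof (rule antisym)
  show "principal_rank s (W - {y}) \<le> principal_rank s W" by (rule principal_rank_Diff_le[OF fin])
  obtain J where J: "J \<subseteq> W" "indep_cols s W J" "card J = principal_rank s W"
    using principal_rank_witness[OF fin] by blast
  have "finite J" using J(1) fin finite_subset by auto
  have yJ: "y \<notin> J"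
  proof
    assume "y \<in> J"
    define c where "c j = (if j = y then 1 else (0::'b))" for j
    have "(\<Sum>j\<in>J. c j * s i j) = (\<Sum>j\<in>{y}. c j * s i j)" for i
      by (rule sum.mono_neutral_right) (use \<open>finite J\<close> \<open>y \<in> J\<close> in \<open>auto simp: c_def\<close>)
    then have "c y = 0" using indep_colsD[OF J(2) _ \<open>y \<in> J\<close>, of c] col by (simp add: c_def)
    then show False by (simp add: c_def)
  qed
  have "indep_cols s (W - {y}) J"
    unfolding indep_cols_def
  proof (intro allI impI)
    fix c assume c: "\<forall>i\<in>W - {y}. (\<Sum>j\<in>J. c j * s i j) = 0"
    have "(\<Sum>j\<in>J. c j * s y j) = 0" using row J(1) by (simp add: subset_iff)
    then show "\<forall>j\<in>J. c j = 0" using indep_colsD[OF J(2), of c] c by blast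
  qed
  then show "principal_rank s W \<le> principal_rank s (W - {y})"
    using card_le_principal_rank[of "W - {y}" J s] J yJ fin by auto
qed

lemma principal_rank_Diff_pendant:
  fixes s :: "'a \<Rightarrow> 'a \<Rightarrow> 'b::field"
  assumes fin: "finite W" and u: "u \<in> W" and v: "v \<in> W" and uv: "u \<noteq> v"
    and suv: "s u v \<noteq> 0" and svu: "s v u \<noteq> 0"
    and row: "\<And>j. j \<in> W - {v} \<Longrightarrow> s u j = 0" and col: "\<And>i. i \<in> W - {v} \<Longrightarrow> s i u = 0"
  shows "principal_rank s (W - {u, v}) + 2 \<le> principal_rank s W"
proof -
  obtain J where J: "J \<subseteq> W - {u,v}" "indep_cols s (W - {u,v}) J" "card J = principal_rank s (W - {u,v})"
    using principal_rank_witness[of "W - {u,v}"] fin by blast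
  have fJ: "finite J" using J fin finite_subset by auto
  let ?K = "insert u (insert v J)"
  have uJ: "u \<notin> J" "v \<notin> J" using J by auto
  have indepK: "indep_cols s W ?K"
    unfolding indep_cols_def
  proof (intro allI impI)
    fix d assume d: "\<forall>i\<in>W. (\<Sum>j\<in>?K. d j * s i j) = 0"
    have sK: "(\<Sum>j\<in>?K. d j * s i j) = d u * s i u + d v * s i v + (\<Sum>j\<in>J. d j * s i j)" for i
      using fJ uJ uv by (simp add: sum.insert)
    have "s u u = 0" using row u uv by simp
    moreover have "(\<Sum>j\<in>J. d j * s u j) = 0" by (rule sum.neutral) (use row J(1) in auto)
    ultimately have "d v * s u v = 0" using d u sK[of u] by simp
    then have dv: "d v = 0" using suv by simp
    have sumJ: "(\<Sum>j\<in>J. d j * s i j) = 0" if i: "i \<in> W - {u,v}" for i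
    proof -
      have "s i u = 0" using col i by blast
      moreover have "(\<Sum>j\<in>?K. d j * s i j) = 0" using d i by simp
      ultimately show ?thesis unfolding sK using dv by simp
    qed
    have dJ: "\<forall>j\<in>J. d j = 0" using indep_colsD[OF J(2) sumJ] by blast
    then have "d u * s v u = 0" using d v sK[of v] dv by simp
    then show "\<forall>j\<in>?K. d j = 0" using svu dv dJ by auto
  qed
  have "?K \<subseteq> W" using J u v by auto
  then have "card ?K \<le> principal_rank s W" by (rule card_le_principal_rank[OF fin _ indepK])
  moreover have "card ?K = card J + 2" using fJ uJ uv by simp
  ultimately show ?thesis using J(3) by simp
qed

section \<open>Components of induced subgraphs\<close>

definition neighbours :: "'a set \<Rightarrow> ('a \<times> 'a) set \<Rightarrow> 'a \<Rightarrow> 'a set" where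
  "neighbours W A x = {u \<in> W. adj A x u}"

definition adj_in :: "'a set \<Rightarrow> ('a \<times> 'a) set \<Rightarrow> ('a \<times> 'a) set" where
  "adj_in W A = {(u,v). u \<in> W \<and> v \<in> W \<and> adj A u v}"

definition component :: "'a set \<Rightarrow> ('a \<times> 'a) set \<Rightarrow> 'a \<Rightarrow> 'a set" where
  "component W A y = {z. (y,z) \<in> (adj_in W A)\<^sup>*}"

lemma adj_sym: "adj A u v \<longleftrightarrow> adj A v u"
  unfolding adj_def by auto

lemma sym_adj_in: "sym ((adj_in W A)\<^sup>*)"
  by (rule sym_rtrancl) (auto simp: sym_def adj_in_def adj_sym)

lemma adj_in_rtrancl_sym: "(u,v) \<in> (adj_in W A)\<^sup>* \<Longrightarrow> (v,u) \<in> (adj_in W A)\<^sup>*"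
  using sym_adj_in by (rule symD)

lemma adj_in_rtrancl_mono: "W' \<subseteq> W \<Longrightarrow> (adj_in W' A)\<^sup>* \<subseteq> (adj_in W A)\<^sup>*"
  by (rule rtrancl_mono) (auto simp: adj_in_def)

lemma adj_in_rtrancl_mem:
  assumes "(u,v) \<in> (adj_in W A)\<^sup>*" and "u \<noteq> v"
  shows "u \<in> W" "v \<in> W"
proof -
  have "(u,v) \<in> (adj_in W A)\<^sup>+" using assms by (simp add: rtrancl_eq_or_trancl)
  then obtain u' v' where "(u,u') \<in> adj_in W A" "(v',v) \<in> adj_in W A"
    using tranclD tranclD2 by metis
  then show "u \<in> W" "v \<in> W" unfolding adj_in_def by auto
qed

lemma component_self: "y \<in> component W A y"
  unfolding component_def by simp

lemma component_subset: "y \<in> W \<Longrightarrow> component W A y \<subseteq> W"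
  unfolding component_def using adj_in_rtrancl_mem by fastforce

lemma component_eq:
  assumes "(y,z) \<in> (adj_in W A)\<^sup>*"
  shows "component W A y = component W A z"
  using rtrancl_trans[OF assms] rtrancl_trans[OF adj_in_rtrancl_sym[OF assms]]
  unfolding component_def by blast

lemma omega_eq_card_components: "omega W A = card (component W A ` W)"
proof -
  have "components_rel W A `` {y} = component W A y" if "y \<in> W" for y
    using component_subset[OF that] that
    unfolding components_rel_def component_def adj_in_def by auto
  then have "W // components_rel W A = component W A ` W"
    unfolding quotient_def by auto
  then show ?thesis unfolding omega_def by simp
qed

lemma adj_in_rtrancl_avoiding:
  assumes "(y,z) \<in> (adj_in W A)\<^sup>*" and "(y,x) \<notin> (adj_in W A)\<^sup>*"
  shows "(y,z) \<in> (adj_in (W - {x}) A)\<^sup>*"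
  using assms
proof (induction rule: rtrancl_induct)
  case (step w z)
  have "(y,z) \<in> (adj_in W A)\<^sup>*" using step(1,2) by (rule rtrancl_into_rtrancl)
  then have "w \<noteq> x" "z \<noteq> x" using step(1,4) by auto
  then have "(w,z) \<in> adj_in (W - {x}) A" using step(2) unfolding adj_in_def by blast
  with step(3,4) show ?case by (simp add: rtrancl_into_rtrancl)
qed simp

lemma adj_in_rtrancl_from_vertex:
  assumes "(x,y) \<in> (adj_in W A)\<^sup>*" and "y \<noteq> x"
  shows "\<exists>a\<in>neighbours W A x. (a,y) \<in> (adj_in (W - {x}) A)\<^sup>*"
  using assms
proof (induction rule: rtrancl_induct)
  case (step w z)
  show ?case
  proof (cases "w = x")
    case True
    then have "z \<in> neighbours W A x" using step(2) unfolding adj_in_def neighbours_def by blast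
    then show ?thesis by blast
  next
    case False
    then obtain a where a: "a \<in> neighbours W A x" "(a,w) \<in> (adj_in (W - {x}) A)\<^sup>*"
      using step(3) by blast
    have "(w,z) \<in> adj_in (W - {x}) A" using step(2) False step(4) unfolding adj_in_def by blast
    then show ?thesis using a rtrancl_into_rtrancl by fast
  qed
qed simp

text \<open>Subgraphs of G are the induced subgraphs G[W] for W \<subseteq> V, described by the fixed arc set A
  and the vertex set W; in particular G - x is G[V - {x}].\<close>

locale ograph =
  fixes V :: "'a set" and A :: "('a \<times> 'a) set"
  assumes oriented: "oriented_graph V A"
begin

lemma finite_V: "finite V"
  using oriented unfolding oriented_graph_def by simp

lemma arcs_subset: "A \<subseteq> V \<times> V"
  using oriented unfolding oriented_graph_def by simp

lemma not_adj_self: "\<not> adj A u u"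
  using oriented unfolding oriented_graph_def adj_def by simp

lemma not_mem_neighbours_self: "x \<notin> neighbours W A x"
  unfolding neighbours_def using not_adj_self by simp

lemma finite_neighbours: "finite (neighbours W A x)"
proof (rule finite_subset[OF _ finite_V])
  show "neighbours W A x \<subseteq> V" using arcs_subset unfolding neighbours_def adj_def by auto
qed

lemma component_Diff_vertex_eq:
  assumes "y \<notin> component W A x"
  shows "component (W - {x}) A y = component W A y"
proof
  show "component (W - {x}) A y \<subseteq> component W A y"
    unfolding component_def using adj_in_rtrancl_mono[of "W - {x}" W A] by auto
  have "(y,x) \<notin> (adj_in W A)\<^sup>*"
  proof
    assume "(y,x) \<in> (adj_in W A)\<^sup>*"
    then have "(x,y) \<in> (adj_in W A)\<^sup>*" by (rule adj_in_rtrancl_sym)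
    then show False using assms unfolding component_def by simp
  qed
  then show "component W A y \<subseteq> component (W - {x}) A y"
    unfolding component_def using adj_in_rtrancl_avoiding by auto
qed

lemma components_Diff_vertex:
  assumes x: "x \<in> W"
  shows "component (W - {x}) A ` (W - {x}) =
           component W A ` (W - component W A x) \<union> component (W - {x}) A ` neighbours W A x"
proof (intro equalityI subsetI)
  fix C assume "C \<in> component (W - {x}) A ` (W - {x})"
  then obtain y where y: "y \<in> W - {x}" "C = component (W - {x}) A y" by auto
  show "C \<in> component W A ` (W - component W A x) \<union> component (W - {x}) A ` neighbours W A x"
  proof (cases "y \<in> component W A x")
    case True
    then have "(x,y) \<in> (adj_in W A)\<^sup>*" unfolding component_def by simp
    moreover have "y \<noteq> x" using y(1) by simp
    ultimately obtain a where a: "a \<in> neighbours W A x" "(a,y) \<in> (adj_in (W - {x}) A)\<^sup>*"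
      using adj_in_rtrancl_from_vertex[of x y W A] by blast
    have "C = component (W - {x}) A a" using y(2) component_eq[OF a(2)] by simp
    then show ?thesis using a(1) by simp
  next
    case False
    then have "C = component W A y" using y(2) component_Diff_vertex_eq by simp
    then show ?thesis using False y(1) by simp
  qed
next
  fix C assume "C \<in> component W A ` (W - component W A x) \<union> component (W - {x}) A ` neighbours W A x"
  then show "C \<in> component (W - {x}) A ` (W - {x})"
  proof (elim UnE imageE)
    fix y assume y: "y \<in> W - component W A x" "C = component W A y"
    have "x \<in> component W A x" by (rule component_self)
    then have "y \<in> W - {x}" using y(1) by auto
    moreover have "C = component (W - {x}) A y" using y component_Diff_vertex_eq by simp
    ultimately show ?thesis by simp
  next
    fix a assume "a \<in> neighbours W A x" "C = component (W - {x}) A a"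
    moreover have "a \<noteq> x" using \<open>a \<in> neighbours W A x\<close> not_mem_neighbours_self by auto
    ultimately show ?thesis unfolding neighbours_def by simp
  qed
qed

lemma components_Diff_vertex_disjoint:
  assumes x: "x \<in> W"
  shows "component W A ` (W - component W A x) \<inter> component (W - {x}) A ` neighbours W A x = {}"
proof (rule ccontr)
  assume "\<not> ?thesis"
  then obtain y a where y: "y \<in> W - component W A x" "a \<in> neighbours W A x"
    "component W A y = component (W - {x}) A a" by blast
  have "a \<in> component W A y"
    using component_self[of a "W - {x}" A] adj_in_rtrancl_mono[of "W - {x}" W A] y(3)
    unfolding component_def by auto
  then have "(y,a) \<in> (adj_in W A)\<^sup>*" unfolding component_def by simp
  moreover have "(a,x) \<in> adj_in W A"
    using y(2) x unfolding neighbours_def adj_in_def by (auto simp: adj_sym)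
  ultimately have "(y,x) \<in> (adj_in W A)\<^sup>*" by (rule rtrancl_into_rtrancl)
  then have "(x,y) \<in> (adj_in W A)\<^sup>*" by (rule adj_in_rtrancl_sym)
  then show False using y(1) unfolding component_def by simp
qed

lemma components_insert_component:
  assumes x: "x \<in> W"
  shows "component W A ` W = insert (component W A x) (component W A ` (W - component W A x))"
proof (intro equalityI subsetI)
  fix C assume "C \<in> component W A ` W"
  then obtain y where y: "y \<in> W" "C = component W A y" by blast
  show "C \<in> insert (component W A x) (component W A ` (W - component W A x))"
  proof (cases "y \<in> component W A x")
    case True
    then have "(x,y) \<in> (adj_in W A)\<^sup>*" unfolding component_def by simp
    then have "C = component W A x" using y(2) component_eq by metis
    then show ?thesis by simp
  qed (use y in blast)
qed (use x in blast)

lemma omega_Diff_vertex: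
  assumes fin: "finite W" and x: "x \<in> W"
  shows "omega (W - {x}) A + 1 = omega W A + card (component (W - {x}) A ` neighbours W A x)"
proof -
  let ?old = "component W A ` (W - component W A x)"
  let ?new = "component (W - {x}) A ` neighbours W A x"
  have "component W A x \<notin> ?old" using component_self[of _ W A] by blast
  then have "omega W A = card ?old + 1"
    using fin by (simp add: omega_eq_card_components components_insert_component[OF x])
  moreover have "omega (W - {x}) A = card ?old + card ?new"
    unfolding omega_eq_card_components components_Diff_vertex[OF x]
    using fin components_Diff_vertex_disjoint[OF x]
    by (simp add: card_Un_disjoint neighbours_def)
  ultimately show ?thesis by simp
qed

end

section \<open>The cyclomatic number\<close>

definition edge_count :: "'a set \<Rightarrow> ('a \<times> 'a) set \<Rightarrow> nat" where
  "edge_count W A = card {e \<in> edges A. e \<subseteq> W}"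

definition cyclomatic_number :: "'a set \<Rightarrow> ('a \<times> 'a) set \<Rightarrow> int" where
  "cyclomatic_number W A = int (edge_count W A) - int (card W) + int (omega W A)"

lemma mem_edges_iff: "e \<in> edges A \<longleftrightarrow> (\<exists>u v. adj A u v \<and> e = {u,v})"
  unfolding edges_def adj_def by (auto simp: insert_commute)

context ograph
begin

lemma finite_edges: "finite (edges A)"
proof -
  have "finite A" using finite_V arcs_subset finite_subset by blast
  moreover have "edges A = (\<lambda>(u,v). {u,v}) ` A" unfolding edges_def by auto
  ultimately show ?thesis by simp
qed

lemma edges_within_Diff_vertex:
  assumes x: "x \<in> W"
  shows "{e \<in> edges A. e \<subseteq> W} =
           {e \<in> edges A. e \<subseteq> W - {x}} \<union> (\<lambda>u. {x,u}) ` neighbours W A x"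
proof (intro equalityI subsetI)
  fix e assume e: "e \<in> {e \<in> edges A. e \<subseteq> W}"
  then obtain u v where uv: "adj A u v" "e = {u,v}" "e \<subseteq> W" by (auto simp: mem_edges_iff)
  consider "x \<notin> e" | "x = u" | "x = v" using uv(2) by blast
  then show "e \<in> {e \<in> edges A. e \<subseteq> W - {x}} \<union> (\<lambda>u. {x,u}) ` neighbours W A x"
  proof cases
    case 1 then show ?thesis using e by blast
  next
    case 2 then show ?thesis using uv unfolding neighbours_def by auto
  next
    case 3 then show ?thesis using uv unfolding neighbours_def by (auto simp: adj_sym insert_commute)
  qed
next
  fix e assume "e \<in> {e \<in> edges A. e \<subseteq> W - {x}} \<union> (\<lambda>u. {x,u}) ` neighbours W A x"
  then show "e \<in> {e \<in> edges A. e \<subseteq> W}"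
    using x unfolding neighbours_def by (auto simp: mem_edges_iff)
qed

lemma edge_count_Diff_vertex:
  assumes x: "x \<in> W"
  shows "edge_count W A = edge_count (W - {x}) A + card (neighbours W A x)"
proof -
  have inj: "inj_on (\<lambda>u. {x,u}) (neighbours W A x)"
    using not_mem_neighbours_self by (auto simp: inj_on_def doubleton_eq_iff)
  show ?thesis
    unfolding edge_count_def edges_within_Diff_vertex[OF x]
    using finite_edges finite_neighbours card_image[OF inj]
    by (subst card_Un_disjoint) auto
qed

lemma cyclomatic_number_Diff_vertex:
  assumes W: "W \<subseteq> V" and x: "x \<in> W"
  shows "cyclomatic_number W A = cyclomatic_number (W - {x}) A
           + int (card (neighbours W A x)) - int (card (component (W - {x}) A ` neighbours W A x))"
proof -
  have fin: "finite W" using finite_V W finite_subset by blast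
  have "card W = card (W - {x}) + 1" using card_Suc_Diff1[OF fin x] by simp
  then show ?thesis
    using edge_count_Diff_vertex[OF x] omega_Diff_vertex[OF fin x]
    unfolding cyclomatic_number_def by simp
qed

lemma cyclomatic_number_Diff_vertex_le:
  assumes W: "W \<subseteq> V"
  shows "cyclomatic_number (W - {x}) A \<le> cyclomatic_number W A"
proof (cases "x \<in> W")
  case True
  have "card (component (W - {x}) A ` neighbours W A x) \<le> card (neighbours W A x)"
    using finite_neighbours by (rule card_image_le)
  then show ?thesis using cyclomatic_number_Diff_vertex[OF W True] by simp
qed simp

lemma cyclomatic_number_nonneg:
  assumes W: "W \<subseteq> V"
  shows "0 \<le> cyclomatic_number W A"
  using finite_subset[OF W finite_V] W
proof (induction rule: finite_induct)
  case empty
  have "{e \<in> edges A. e \<subseteq> {}} = {}" by (auto simp: mem_edges_iff)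
  then show ?case unfolding cyclomatic_number_def edge_count_def omega_eq_card_components by simp
next
  case (insert x F)
  then show ?case using cyclomatic_number_Diff_vertex_le[OF insert(4), of x] by simp
qed

end

section \<open>The lower bound\<close>

lemma finite_independent_sets: "finite W \<Longrightarrow> finite {S. independent_set W A S}"
  by (rule finite_subset[of _ "Pow W"]) (auto simp: independent_set_def)

lemma card_le_independence_number:
  assumes "finite W" and "independent_set W A S"
  shows "card S \<le> independence_number W A"
proof -
  have "card S \<in> card ` {S. independent_set W A S}" using assms(2) by blast
  then show ?thesis unfolding independence_number_def
    by (intro Max_ge finite_imageI finite_independent_sets assms(1))
qed

lemma independence_number_witness:
  assumes "finite W"
  obtains S where "independent_set W A S" "card S = independence_number W A"
proof -
  have "independent_set W A {}" unfolding independent_set_def by simp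
  then have "independence_number W A \<in> card ` {S. independent_set W A S}"
    unfolding independence_number_def
    by (intro Max_in finite_imageI finite_independent_sets assms) blast
  then show ?thesis using that by auto
qed

lemma independence_number_Diff_le:
  assumes "finite W"
  shows "independence_number (W - X) A \<le> independence_number W A"
proof -
  obtain S where S: "independent_set (W - X) A S" "card S = independence_number (W - X) A"
    using independence_number_witness[of "W - X"] assms by blast
  then have "independent_set W A S" unfolding independent_set_def by blast
  then show ?thesis using card_le_independence_number[OF assms] S(2) by metis
qed

text \<open>x lies on a cycle of G[W] iff two of its neighbours stay connected after deleting x.\<close>

definition cycle_vertex :: "'a set \<Rightarrow> ('a \<times> 'a) set \<Rightarrow> 'a \<Rightarrow> bool" where
  "cycle_vertex W A x \<longleftrightarrow> \<not> inj_on (component (W - {x}) A) (neighbours W A x)"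

lemma skew_entry_eq_0_iff: "skew_entry A i j = 0 \<longleftrightarrow> \<not> adj A i j"
  unfolding skew_entry_def adj_def by simp

context ograph
begin

lemma independence_number_Diff_add:
  assumes fin: "finite W" and u: "u \<in> W" "u \<in> Z" and nadj: "\<And>v. v \<in> W - Z \<Longrightarrow> \<not> adj A u v"
  shows "independence_number (W - Z) A + 1 \<le> independence_number W A"
proof -
  obtain S where S: "independent_set (W - Z) A S" "card S = independence_number (W - Z) A"
    using independence_number_witness[of "W - Z"] fin by blast
  have SW: "S \<subseteq> W - Z" using S(1) unfolding independent_set_def by simp
  have "independent_set W A (insert u S)"
    using S(1) SW u nadj not_adj_self unfolding independent_set_def by (auto simp: adj_sym)
  then have "card (insert u S) \<le> independence_number W A" by (rule card_le_independence_number[OF fin])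
  moreover have "finite S" "u \<notin> S" using SW fin finite_subset u by auto
  ultimately show ?thesis using S(2) by simp
qed

lemma card_components_less_if_cycle_vertex:
  "cycle_vertex W A x \<Longrightarrow> card (component (W - {x}) A ` neighbours W A x) < card (neighbours W A x)"
  using card_image_le[OF finite_neighbours] inj_on_iff_eq_card[OF finite_neighbours]
  unfolding cycle_vertex_def by (metis le_neq_implies_less)

lemma component_psubset_if_not_cycle_vertex:
  assumes a: "a \<in> W" and nc: "\<not> cycle_vertex W A a"
    and x: "x \<in> neighbours W A a" and b: "b \<in> neighbours W A a" "b \<noteq> x"
  shows "component (W - {a}) A b \<subset> component (W - {x}) A a"
proof -
  have "component (W - {a}) A b \<noteq> component (W - {a}) A x"
    using nc x b unfolding cycle_vertex_def inj_on_def by blast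
  then have bx: "(b,x) \<notin> (adj_in (W - {a}) A)\<^sup>*" using component_eq by metis
  have ab: "(a,b) \<in> adj_in (W - {x}) A"
    using a b x not_mem_neighbours_self[of a] unfolding neighbours_def adj_in_def by auto
  have sub: "component (W - {a}) A b \<subseteq> component (W - {x}) A a"
  proof
    fix z assume "z \<in> component (W - {a}) A b"
    then have "(b,z) \<in> (adj_in (W - {a} - {x}) A)\<^sup>*"
      using adj_in_rtrancl_avoiding[OF _ bx] unfolding component_def by simp
    then have "(b,z) \<in> (adj_in (W - {x}) A)\<^sup>*" using adj_in_rtrancl_mono[of "W - {a} - {x}" "W - {x}" A] by auto
    then show "z \<in> component (W - {x}) A a"
      using ab unfolding component_def by (simp add: converse_rtrancl_into_rtrancl)
  qed
  have "a \<notin> component (W - {a}) A b"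
    using adj_in_rtrancl_mem(2)[of b a "W - {a}" A] b not_mem_neighbours_self[of a]
    unfolding component_def by auto
  then show ?thesis using sub component_self[of a "W - {x}" A] by blast
qed

text \<open>If there is no cycle vertex, pick an arc (x,a) for which the component of a in G[W] - x is
  smallest; a further neighbour b of a then has a strictly smaller component in G[W] - a.\<close>

lemma exists_cycle_vertex:
  assumes W: "W \<subseteq> V" and ne: "W \<noteq> {}" and deg: "\<And>x. x \<in> W \<Longrightarrow> 2 \<le> card (neighbours W A x)"
  shows "\<exists>x\<in>W. cycle_vertex W A x"
proof (rule ccontr)
  assume "\<not> ?thesis"
  then have nc: "\<And>x. x \<in> W \<Longrightarrow> \<not> cycle_vertex W A x" by blast
  have fin: "finite W" using finite_subset[OF W finite_V] .
  define P where "P = {(x,a). x \<in> W \<and> a \<in> neighbours W A x}"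
  define g where "g = (\<lambda>(x,a). card (component (W - {x}) A a))"
  have "P \<subseteq> W \<times> W" unfolding P_def neighbours_def by auto
  then have "finite P" using fin finite_subset by blast
  obtain x0 where x0: "x0 \<in> W" using ne by blast
  then obtain a0 where "a0 \<in> neighbours W A x0" using deg[OF x0] by fastforce
  then have "P \<noteq> {}" using x0 unfolding P_def by blast
  obtain x a where xa: "arg_min_on g P = (x,a)" by (rule prod.exhaust)
  then have "(x,a) \<in> P" using arg_min_if_finite(1)[OF \<open>finite P\<close> \<open>P \<noteq> {}\<close>, of g] by simp
  have min: "g (x,a) \<le> g q" if "q \<in> P" for q
    using arg_min_least[OF \<open>finite P\<close> \<open>P \<noteq> {}\<close> that, of g] xa by simp
  from \<open>(x,a) \<in> P\<close> have xW: "x \<in> W" and aN: "a \<in> neighbours W A x" unfolding P_def by auto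
  have aW: "a \<in> W" using aN unfolding neighbours_def by simp
  have xNa: "x \<in> neighbours W A a" using aN xW unfolding neighbours_def by (simp add: adj_sym)
  have "card (neighbours W A a - {x}) \<noteq> 0" using deg[OF aW] xNa finite_neighbours by simp
  then have "neighbours W A a - {x} \<noteq> {}" by (intro notI) (simp only: card.empty)
  then obtain b where bN: "b \<in> neighbours W A a" and bx: "b \<noteq> x" by blast
  have "component (W - {a}) A b \<subset> component (W - {x}) A a"
    by (rule component_psubset_if_not_cycle_vertex[OF aW nc[OF aW] xNa bN bx])
  moreover have "a \<in> W - {x}" using aW aN not_mem_neighbours_self[of x W] by auto
  then have "finite (component (W - {x}) A a)"
    using component_subset[of a "W - {x}" A] fin finite_subset by blast
  ultimately have "g (a,b) < g (x,a)" unfolding g_def by (simp add: psubset_card_mono)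
  moreover have "(a,b) \<in> P" using aW bN unfolding P_def by simp
  ultimately show False using min[of "(a,b)"] by simp
qed

definition slack :: "'a set \<Rightarrow> int" where
  "slack W = int (principal_rank (skew_entry A) W) + 2 * int (independence_number W A)
     - 2 * int (card W) + 2 * cyclomatic_number W A"

lemma slack_Diff_vertex:
  assumes W: "W \<subseteq> V" and x: "x \<in> W"
  shows "slack W = slack (W - {x})
     + (int (principal_rank (skew_entry A) W) - int (principal_rank (skew_entry A) (W - {x})))
     + 2 * (int (independence_number W A) - int (independence_number (W - {x}) A))
     + 2 * (int (card (neighbours W A x)) - int (card (component (W - {x}) A ` neighbours W A x)) - 1)"
proof -
  have "card W = card (W - {x}) + 1"
    using card_Suc_Diff1[OF finite_subset[OF W finite_V] x] by simp
  then show ?thesis using cyclomatic_number_Diff_vertex[OF W x] unfolding slack_def by simp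
qed

lemma slack_Diff_cycle_vertex:
  assumes W: "W \<subseteq> V" and x: "x \<in> W" and cyc: "cycle_vertex W A x"
  shows "slack (W - {x}) \<le> slack W"
proof -
  have fin: "finite W" using finite_subset[OF W finite_V] .
  have "int (card (component (W - {x}) A ` neighbours W A x)) + 1 \<le> int (card (neighbours W A x))"
    using card_components_less_if_cycle_vertex[OF cyc] by simp
  moreover have "int (principal_rank (skew_entry A) (W - {x})) \<le> int (principal_rank (skew_entry A) W)"
    using principal_rank_Diff_le[OF fin] by simp
  moreover have "int (independence_number (W - {x}) A) \<le> int (independence_number W A)"
    using independence_number_Diff_le[OF fin] by simp
  ultimately show ?thesis using slack_Diff_vertex[OF W x] by arith
qed

lemma slack_Diff_isolated:
  assumes W: "W \<subseteq> V" and y: "y \<in> W" and iso: "neighbours W A y = {}"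
  shows "slack (W - {y}) \<le> slack W"
proof -
  have fin: "finite W" using finite_subset[OF W finite_V] .
  have nadj: "\<not> adj A y j" if "j \<in> W" for j using iso that unfolding neighbours_def by blast
  have "principal_rank (skew_entry A) (W - {y}) = principal_rank (skew_entry A) W"
    by (rule principal_rank_Diff_isolated[OF fin y])
       (use nadj in \<open>auto simp: skew_entry_eq_0_iff adj_sym[of A _ y]\<close>)
  moreover have "independence_number (W - {y}) A + 1 \<le> independence_number W A"
    by (rule independence_number_Diff_add[OF fin y]) (use nadj in auto)
  ultimately show ?thesis using slack_Diff_vertex[OF W y] iso by simp
qed

lemma slack_Diff_pendant:
  assumes W: "W \<subseteq> V" and u: "u \<in> W" and pend: "neighbours W A u = {v}"
  shows "slack (W - {u,v}) \<le> slack W"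
proof -
  have fin: "finite W" using finite_subset[OF W finite_V] .
  have v: "v \<in> W" "adj A u v" using pend unfolding neighbours_def by auto
  have uv: "u \<noteq> v" using v(2) not_adj_self by auto
  have nadj: "\<not> adj A u j" if "j \<in> W - {v}" for j using pend that unfolding neighbours_def by blast
  have "principal_rank (skew_entry A) (W - {u,v}) + 2 \<le> principal_rank (skew_entry A) W"
    by (rule principal_rank_Diff_pendant[OF fin u v(1) uv])
       (use v(2) nadj in \<open>auto simp: skew_entry_eq_0_iff adj_sym[of A _ u] adj_sym[of A v]\<close>)
  moreover have "independence_number (W - {u,v}) A + 1 \<le> independence_number W A"
    by (rule independence_number_Diff_add[OF fin u]) (use nadj in auto)
  moreover have "cyclomatic_number (W - {u,v}) A \<le> cyclomatic_number W A"
  proof -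
    have "W - {u} \<subseteq> V" using W by blast
    then show ?thesis
      using cyclomatic_number_Diff_vertex_le[of "W - {u}" v] cyclomatic_number_Diff_vertex_le[OF W, of u]
      unfolding Diff_insert2[of W u "{v}"] by linarith
  qed
  moreover have "card W = card (W - {u,v}) + 2"
    using card_Suc_Diff1[OF fin u] card_Suc_Diff1[of "W - {u}" v] fin v(1) uv
    unfolding Diff_insert2[of W u "{v}"] by simp
  ultimately show ?thesis unfolding slack_def by simp
qed

lemma slack_reduction:
  assumes W: "W \<subseteq> V" and ne: "W \<noteq> {}"
  shows "\<exists>X\<subseteq>W. X \<noteq> {} \<and> slack (W - X) \<le> slack W"
proof (cases "\<exists>x\<in>W. cycle_vertex W A x")
  case True
  then obtain x where "x \<in> W" "cycle_vertex W A x" by blast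
  then show ?thesis using slack_Diff_cycle_vertex[OF W] by (intro exI[of _ "{x}"]) simp
next
  case False
  then obtain u where u: "u \<in> W" "card (neighbours W A u) < 2"
    using exists_cycle_vertex[OF W ne] by (meson not_le)
  then have "card (neighbours W A u) = 0 \<or> card (neighbours W A u) = 1" by linarith
  then show ?thesis
  proof
    assume "card (neighbours W A u) = 0"
    then have "neighbours W A u = {}" using finite_neighbours by simp
    then show ?thesis using slack_Diff_isolated[OF W u(1)] u(1) by (intro exI[of _ "{u}"]) simp
  next
    assume "card (neighbours W A u) = 1"
    then obtain v where pend: "neighbours W A u = {v}" by (rule card_1_singletonE)
    then have "v \<in> W" unfolding neighbours_def by blast
    then show ?thesis using slack_Diff_pendant[OF W u(1) pend] u(1) by (intro exI[of _ "{u,v}"]) simp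
  qed
qed

lemma slack_nonneg: "W \<subseteq> V \<Longrightarrow> 0 \<le> slack W"
proof (induction "card W" arbitrary: W rule: less_induct)
  case less
  show ?case
  proof (cases "W = {}")
    case True then show ?thesis by (simp add: slack_def cyclomatic_number_nonneg)
  next
    case False
    then obtain X where X: "X \<subseteq> W" "X \<noteq> {}" "slack (W - X) \<le> slack W"
      using slack_reduction[OF less.prems] by blast
    then have "W - X \<subset> W" by blast
    then have "card (W - X) < card W" by (rule psubset_card_mono[OF finite_subset[OF less.prems finite_V]])
    then have "0 \<le> slack (W - X)" using less.hyps less.prems by blast
    then show ?thesis using X(3) by simp
  qed
qed

end

section \<open>Cycles as periodic walks\<close>

definition cycle_walk :: "'a set \<Rightarrow> ('a \<times> 'a) set \<Rightarrow> nat \<Rightarrow> (nat \<Rightarrow> 'a) \<Rightarrow> bool" where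
  "cycle_walk V A L f \<longleftrightarrow> 3 \<le> L \<and> range f \<subseteq> V \<and> (\<forall>t. adj A (f t) (f (Suc t))) \<and>
     (\<forall>s t. f s = f t \<longleftrightarrow> s mod L = t mod L)"

definition walk_edges :: "(nat \<Rightarrow> 'a) \<Rightarrow> 'a set set" where
  "walk_edges f = range (\<lambda>t. {f t, f (Suc t)})"

lemma Union_walk_edges: "\<Union> (walk_edges f) = range f"
  unfolding walk_edges_def by blast

lemma cycle_walk_shift:
  assumes "cycle_walk V A L f"
  shows "cycle_walk V A L (\<lambda>t. f (p + t))"
  using assms unfolding cycle_walk_def by (auto simp: nat_mod_eq_iff)

lemma walk_edges_shift:
  assumes f: "cycle_walk V A L f"
  shows "walk_edges (\<lambda>t. f (p + t)) = walk_edges f"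
proof
  have "{f (p + t), f (Suc (p + t))} \<in> walk_edges f" for t
    unfolding walk_edges_def by (rule rangeI)
  then show "walk_edges (\<lambda>t. f (p + t)) \<subseteq> walk_edges f"
    unfolding walk_edges_def[of "\<lambda>t. f (p + t)"] by auto
  have L: "1 \<le> L" using f unfolding cycle_walk_def by simp
  have wrap: "f (p + (t + (L - 1) * p)) = f t" for t
  proof -
    have eq: "p + (t + (L - 1) * p) = t + p * L" using L by (cases L) (auto simp: algebra_simps)
    have "(p + (t + (L - 1) * p)) mod L = t mod L" unfolding eq by simp
    then show ?thesis using f unfolding cycle_walk_def by blast
  qed
  show "walk_edges f \<subseteq> walk_edges (\<lambda>t. f (p + t))"
  proof
    fix e assume "e \<in> walk_edges f"
    then obtain t where "e = {f t, f (Suc t)}" unfolding walk_edges_def by blast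
    then have "e = {f (p + (t + (L - 1) * p)), f (p + Suc (t + (L - 1) * p))}"
      using wrap[of t] wrap[of "Suc t"] by simp
    then show "e \<in> walk_edges (\<lambda>t. f (p + t))" unfolding walk_edges_def by blast
  qed
qed

lemma cycle_walk_from_list:
  assumes "length vs \<ge> 3" "distinct vs" "set vs \<subseteq> V"
    and "\<forall>i < length vs. adj A (vs ! i) (vs ! ((i + 1) mod length vs))"
  shows "cycle_walk V A (length vs) (\<lambda>t. vs ! (t mod length vs))"
    and "walk_edges (\<lambda>t. vs ! (t mod length vs)) =
           {{vs ! i, vs ! ((i + 1) mod length vs)} | i. i < length vs}"
proof -
  let ?L = "length vs"
  have L: "0 < ?L" and ne: "vs \<noteq> []" using assms(1) by auto
  have "adj A (vs ! (t mod ?L)) (vs ! (Suc t mod ?L))" for t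
  proof -
    have "t mod ?L < ?L" using L by simp
    then have "adj A (vs ! (t mod ?L)) (vs ! ((t mod ?L + 1) mod ?L))" using assms(4) by blast
    then show ?thesis by (simp add: mod_Suc_eq)
  qed
  then show "cycle_walk V A ?L (\<lambda>t. vs ! (t mod ?L))"
    using assms(1-3) L ne unfolding cycle_walk_def by (auto simp: nth_eq_iff_index_eq)
  show "walk_edges (\<lambda>t. vs ! (t mod ?L)) = {{vs ! i, vs ! ((i + 1) mod ?L)} | i. i < ?L}"
  proof (intro equalityI subsetI)
    fix e assume "e \<in> walk_edges (\<lambda>t. vs ! (t mod ?L))"
    then obtain t where "e = {vs ! (t mod ?L), vs ! (Suc t mod ?L)}" unfolding walk_edges_def by blast
    moreover have "Suc t mod ?L = (t mod ?L + 1) mod ?L" by (simp add: mod_Suc_eq)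
    moreover have "t mod ?L < ?L" using L by simp
    ultimately show "e \<in> {{vs ! i, vs ! ((i + 1) mod ?L)} | i. i < ?L}" by auto
  next
    fix e assume "e \<in> {{vs ! i, vs ! ((i + 1) mod ?L)} | i. i < ?L}"
    then obtain i where "i < ?L" "e = {vs ! i, vs ! ((i + 1) mod ?L)}" by blast
    then have "e = {vs ! (i mod ?L), vs ! (Suc i mod ?L)}" by simp
    then show "e \<in> walk_edges (\<lambda>t. vs ! (t mod ?L))" unfolding walk_edges_def by blast
  qed
qed

lemma is_cycle_walk:
  assumes "is_cycle V A C" and "on_cycle x C"
  obtains L f where "cycle_walk V A L f" "f 0 = x" "C = walk_edges f"
proof -
  obtain vs where vs: "length vs \<ge> 3" "distinct vs" "set vs \<subseteq> V"
    "\<forall>i < length vs. adj A (vs ! i) (vs ! ((i + 1) mod length vs))"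
    "C = {{vs ! i, vs ! ((i + 1) mod length vs)} | i. i < length vs}"
    using assms(1) unfolding is_cycle_def by blast
  define g where "g t = vs ! (t mod length vs)" for t
  have g: "cycle_walk V A (length vs) g" "C = walk_edges g"
    using cycle_walk_from_list[OF vs(1-4)] vs(5) unfolding g_def by simp_all
  obtain p where "x = g p"
    using assms(2) unfolding on_cycle_def g(2) walk_edges_def by blast
  then show ?thesis
    using that[OF cycle_walk_shift[OF g(1), of p]] walk_edges_shift[OF g(1), of p] g(2) by simp
qed

context ograph
begin

lemma cycle_walk_neighbours:
  assumes f: "cycle_walk V A L f"
  shows "f 1 \<in> neighbours V A (f 0)" "f (L - 1) \<in> neighbours V A (f 0)" "f 1 \<noteq> f (L - 1)"
    and "(f 1, f (L - 1)) \<in> (adj_in (V - {f 0}) A)\<^sup>*"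
proof -
  have L: "3 \<le> L" and fV: "\<And>t. f t \<in> V" and fadj: "\<And>t. adj A (f t) (f (Suc t))"
    and feq: "\<And>s t. f s = f t \<longleftrightarrow> s mod L = t mod L"
    using f unfolding cycle_walk_def by auto
  have inner: "f t \<noteq> f 0" if "0 < t" "t < L" for t using feq[of t 0] that by simp
  show "f 1 \<in> neighbours V A (f 0)" using fadj[of 0] fV unfolding neighbours_def by simp
  have "f (Suc (L - 1)) = f 0" using feq[of "Suc (L - 1)" 0] L by simp
  then show "f (L - 1) \<in> neighbours V A (f 0)"
    using fadj[of "L - 1"] fV unfolding neighbours_def by (simp add: adj_sym)
  show "f 1 \<noteq> f (L - 1)" using feq[of 1 "L - 1"] L by simp
  have "1 \<le> t \<Longrightarrow> t \<le> L - 1 \<Longrightarrow> (f 1, f t) \<in> (adj_in (V - {f 0}) A)\<^sup>*" for t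
  proof (induction t)
    case (Suc t)
    show ?case
    proof (cases "t = 0")
      case False
      then have "(f t, f (Suc t)) \<in> adj_in (V - {f 0}) A"
        using inner[of t] inner[of "Suc t"] Suc.prems fV fadj unfolding adj_in_def by simp
      then show ?thesis using Suc False by (simp add: rtrancl_into_rtrancl)
    qed simp
  qed simp
  then show "(f 1, f (L - 1)) \<in> (adj_in (V - {f 0}) A)\<^sup>*" using L by simp
qed

lemma cycle_vertex_if_on_cycle:
  assumes "is_cycle V A C" and "on_cycle x C"
  shows "cycle_vertex V A x"
proof -
  obtain L f where f: "cycle_walk V A L f" "f 0 = x" using is_cycle_walk[OF assms] by metis
  have "component (V - {x}) A (f 1) = component (V - {x}) A (f (L - 1))"
    using component_eq cycle_walk_neighbours(4)[OF f(1)] f(2) by metis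
  then show ?thesis
    using cycle_walk_neighbours(1-3)[OF f(1)] f(2) unfolding cycle_vertex_def inj_on_def by metis
qed

end

section \<open>Lower-optimal graphs\<close>

lemma inj_on_Diff_if_card_image_Suc:
  assumes fin: "finite N" and card: "card (g ` N) + 1 = card N"
    and ab: "a \<in> N" "b \<in> N" "a \<noteq> b" "g a = g b"
  shows "inj_on g (N - {b})"
proof (rule eq_card_imp_inj_on)
  have "g b \<in> g ` (N - {b})" using ab(1,3,4) by (intro image_eqI[of _ _ a]) auto
  then have "g ` (N - {b}) = g ` N" using image_insert[of g b "N - {b}"] insert_Diff[OF ab(2)] by auto
  then show "card (g ` (N - {b})) = card (N - {b})" using card ab(2) fin by simp
qed (use fin in simp)

lemma adj_del_vertex: "u \<noteq> x \<Longrightarrow> v \<noteq> x \<Longrightarrow> adj (del_vertex_A A x) u v \<longleftrightarrow> adj A u v"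
  unfolding adj_def del_vertex_A_def by auto

lemma skew_entry_del_vertex: "u \<noteq> x \<Longrightarrow> v \<noteq> x \<Longrightarrow> skew_entry (del_vertex_A A x) u v = skew_entry A u v"
  unfolding skew_entry_def del_vertex_A_def by auto

lemma independence_number_del_vertex:
  "independence_number (del_vertex_V V x) (del_vertex_A A x) = independence_number (V - {x}) A"
proof -
  have "independent_set (V - {x}) (del_vertex_A A x) = independent_set (V - {x}) A"
    by (intro ext) (auto simp: independent_set_def adj_del_vertex subset_iff)
  then show ?thesis unfolding independence_number_def del_vertex_V_def by simp
qed

context ograph
begin

lemma skew_rank_del_vertex:
  "skew_rank (del_vertex_V V x) (del_vertex_A A x) = principal_rank (skew_entry A) (V - {x})"
  unfolding del_vertex_V_def skew_rank_eq_principal_rank[OF finite_Diff[OF finite_V]]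
  by (rule principal_rank_cong) (simp add: skew_entry_del_vertex)

lemma dim_d_del_vertex: "dim_d (del_vertex_V V x) (del_vertex_A A x) = cyclomatic_number (V - {x}) A"
proof -
  have "omega (V - {x}) (del_vertex_A A x) = omega (V - {x}) A"
    unfolding omega_def components_rel_def by (simp add: adj_del_vertex cong: conj_cong)
  moreover have "edges (del_vertex_A A x) = {e \<in> edges A. e \<subseteq> V - {x}}"
    using arcs_subset unfolding edges_def del_vertex_A_def by blast
  ultimately show ?thesis
    unfolding dim_d_def cyclomatic_number_def edge_count_def del_vertex_V_def by simp
qed

lemma dim_d_eq_cyclomatic_number: "dim_d V A = cyclomatic_number V A"
proof -
  have "{e \<in> edges A. e \<subseteq> V} = edges A" using arcs_subset unfolding edges_def by blast
  then show ?thesis unfolding dim_d_def cyclomatic_number_def edge_count_def by simp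
qed

lemma lower_optimal_iff_slack: "lower_optimal V A \<longleftrightarrow> slack V = 0"
  using dim_d_eq_cyclomatic_number
  unfolding lower_optimal_def slack_def skew_rank_eq_principal_rank[OF finite_V] by linarith

lemma lower_optimal_del_vertex_iff:
  "lower_optimal (del_vertex_V V x) (del_vertex_A A x) \<longleftrightarrow> slack (V - {x}) = 0"
  using skew_rank_del_vertex[of x] independence_number_del_vertex[of V x A] dim_d_del_vertex[of x]
  unfolding lower_optimal_def slack_def del_vertex_V_def by linarith

text \<open>slack V = 0 forces each of the nonnegative summands in slack_Diff_vertex to vanish.\<close>

lemma lower_optimal_cycle_vertex:
  assumes lo: "lower_optimal V A" and x: "x \<in> V" and cyc: "cycle_vertex V A x"
  shows "principal_rank (skew_entry A) (V - {x}) = principal_rank (skew_entry A) V"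
    and "independence_number (V - {x}) A = independence_number V A"
    and "card (component (V - {x}) A ` neighbours V A x) + 1 = card (neighbours V A x)"
    and "slack (V - {x}) = 0"
proof -
  define r where "r = int (principal_rank (skew_entry A) V) - int (principal_rank (skew_entry A) (V - {x}))"
  define a where "a = int (independence_number V A) - int (independence_number (V - {x}) A)"
  define d where "d = int (card (neighbours V A x)) - int (card (component (V - {x}) A ` neighbours V A x)) - 1"
  have "0 \<le> r" using principal_rank_Diff_le[OF finite_V] unfolding r_def by simp
  moreover have "0 \<le> a" using independence_number_Diff_le[OF finite_V] unfolding a_def by simp
  moreover have "0 \<le> d" using card_components_less_if_cycle_vertex[OF cyc] unfolding d_def by simp
  moreover have "slack V = slack (V - {x}) + r + 2 * a + 2 * d"
    using slack_Diff_vertex[OF subset_refl x] unfolding r_def a_def d_def .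
  moreover have "slack V = 0" using lo lower_optimal_iff_slack by simp
  moreover have "0 \<le> slack (V - {x})" using slack_nonneg[of "V - {x}"] by blast
  ultimately have "r = 0" "a = 0" "d = 0" "slack (V - {x}) = 0" by linarith+
  then show "principal_rank (skew_entry A) (V - {x}) = principal_rank (skew_entry A) V"
    and "independence_number (V - {x}) A = independence_number V A"
    and "card (component (V - {x}) A ` neighbours V A x) + 1 = card (neighbours V A x)"
    and "slack (V - {x}) = 0"
    unfolding r_def a_def d_def by simp_all
qed

lemma joined_neighbour_pair_unique:
  assumes lo: "lower_optimal V A" and x: "x \<in> V"
    and ab: "a \<in> neighbours V A x" "b \<in> neighbours V A x" "a \<noteq> b" "(a,b) \<in> (adj_in (V - {x}) A)\<^sup>*"
    and cd: "c \<in> neighbours V A x" "d \<in> neighbours V A x" "c \<noteq> d" "(c,d) \<in> (adj_in (V - {x}) A)\<^sup>*"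
  shows "{a,b} = {c,d}"
proof -
  let ?g = "component (V - {x}) A" and ?N = "neighbours V A x"
  have gab: "?g a = ?g b" using component_eq[OF ab(4)] .
  have gcd: "?g c = ?g d" using component_eq[OF cd(4)] .
  have "cycle_vertex V A x"
    unfolding cycle_vertex_def
  proof
    assume "inj_on ?g ?N"
    then have "a = b" using gab ab(1,2) by (rule inj_onD)
    then show False using ab(3) by simp
  qed
  then have card: "card (?g ` ?N) + 1 = card ?N" by (rule lower_optimal_cycle_vertex(3)[OF lo x])
  have inj: "inj_on ?g (?N - {b})" "inj_on ?g (?N - {a})"
    using inj_on_Diff_if_card_image_Suc[OF finite_neighbours card] ab(1-3) gab by simp_all
  have "y \<in> {c,d}" if "y \<in> {a,b}" for y
  proof (rule ccontr)
    assume "y \<notin> {c,d}"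
    then have "c \<in> ?N - {y}" "d \<in> ?N - {y}" using cd(1,2) by auto
    moreover have "inj_on ?g (?N - {y})" using that inj by auto
    ultimately have "c = d" using gcd by (blast dest: inj_onD)
    then show False using cd(3) by simp
  qed
  then show ?thesis using ab(3) cd(3) by blast
qed

text \<open>Walking along C2 from x, each vertex reached lies on C1 and, by the uniqueness of the joined
  neighbour pair there, the next step of C2 is a step of C1.\<close>

lemma cycle_through_subset:
  assumes lo: "lower_optimal V A"
    and C1: "is_cycle V A C1" "on_cycle x C1" and C2: "is_cycle V A C2" "on_cycle x C2"
  shows "C2 \<subseteq> C1"
proof -
  obtain L1 f1 where f1: "cycle_walk V A L1 f1" "f1 0 = x" "C1 = walk_edges f1"
    using is_cycle_walk[OF C1] by metis
  obtain L2 f2 where f2: "cycle_walk V A L2 f2" "f2 0 = x" "C2 = walk_edges f2"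
    using is_cycle_walk[OF C2] by metis
  have step: "{f2 t, f2 (Suc t)} \<in> C1" if "f2 t = f1 s" for s t
  proof -
    define g1 where "g1 u = f1 (s + u)" for u
    define g2 where "g2 u = f2 (t + u)" for u
    have g: "cycle_walk V A L1 g1" "cycle_walk V A L2 g2"
      unfolding g1_def g2_def by (rule cycle_walk_shift[OF f1(1)], rule cycle_walk_shift[OF f2(1)])
    have g0: "g1 0 = f1 s" "g2 0 = f1 s" unfolding g1_def g2_def using that by simp_all
    have "f1 s \<in> V" using f1(1) unfolding cycle_walk_def by auto
    then have "{g1 1, g1 (L1 - 1)} = {g2 1, g2 (L2 - 1)}"
      using joined_neighbour_pair_unique[OF lo] cycle_walk_neighbours[OF g(1)] cycle_walk_neighbours[OF g(2)]
      unfolding g0 by blast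
    then have "f2 (Suc t) = f1 (Suc s) \<or> f2 (Suc t) = f1 (s + (L1 - 1))"
      unfolding g1_def g2_def by (auto simp: doubleton_eq_iff)
    moreover have "f1 (Suc (s + (L1 - 1))) = f1 s"
      using f1(1) unfolding cycle_walk_def by (auto simp: Suc_diff_le)
    ultimately have "{f2 t, f2 (Suc t)} \<in> {{f1 s, f1 (Suc s)}, {f1 (s + (L1 - 1)), f1 (Suc (s + (L1 - 1)))}}"
      using that by auto
    then show ?thesis unfolding f1(3) walk_edges_def by blast
  qed
  have "f2 t \<in> range f1" for t
  proof (induction t)
    case 0 show ?case using f1(2) f2(2) by (metis rangeI)
  next
    case (Suc t)
    then obtain s where "f2 t = f1 s" by blast
    then have "{f2 t, f2 (Suc t)} \<in> walk_edges f1" using step f1(3) by simp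
    then show ?case using Union_walk_edges[of f1] by blast
  qed
  then show ?thesis unfolding f2(3) walk_edges_def using step by blast
qed

lemma card_cycles_through:
  assumes lo: "lower_optimal V A" and C: "is_cycle V A C" "on_cycle x C"
  shows "card {C. is_cycle V A C \<and> on_cycle x C} = 1"
proof -
  have "{C. is_cycle V A C \<and> on_cycle x C} = {C}"
    using cycle_through_subset[OF lo] C by blast
  then show ?thesis by simp
qed

lemma not_quasi_pendant_if_lower_optimal:
  assumes lo: "lower_optimal V A" and x: "x \<in> V" and cyc: "cycle_vertex V A x"
  shows "\<not> quasi_pendant V A x"
proof
  assume "quasi_pendant V A x"
  then obtain u where u: "u \<in> V" "adj A x u" "pendant V A u" unfolding quasi_pendant_def by blast
  have "x \<in> neighbours V A u" using x u(2) unfolding neighbours_def by (simp add: adj_sym)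
  moreover have "card (neighbours V A u) = 1"
    using u(3) unfolding pendant_def degree_def neighbours_def by simp
  ultimately have Nu: "neighbours V A u = {x}" by (metis card_1_singletonE singletonD)
  have ux: "u \<noteq> x" using u(2) not_adj_self by auto
  have nadj: "\<not> adj A u j" if "j \<in> V - {x}" for j using Nu that unfolding neighbours_def by blast
  have "principal_rank (skew_entry A) (V - {u,x}) + 2 \<le> principal_rank (skew_entry A) V"
    by (rule principal_rank_Diff_pendant[OF finite_V u(1) x ux])
       (use u(2) nadj in \<open>auto simp: skew_entry_eq_0_iff adj_sym[of A _ u] adj_sym[of A x]\<close>)
  moreover have "principal_rank (skew_entry A) (V - {x} - {u}) = principal_rank (skew_entry A) (V - {x})"
    by (rule principal_rank_Diff_isolated)
       (use finite_V u(1) ux nadj in \<open>auto simp: skew_entry_eq_0_iff adj_sym[of A _ u]\<close>)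
  moreover have "V - {x} - {u} = V - {u,x}" by blast
  ultimately show False using lower_optimal_cycle_vertex(1)[OF lo x cyc] by simp
qed

end

theorem lemma2p2:
  fixes V :: "'a set" and A :: "('a \<times> 'a) set" and x :: 'a
  assumes "oriented_graph V A"
    and "lower_optimal V A"
    and "x \<in> V"
    and "\<exists>C. is_cycle V A C \<and> on_cycle x C"
  shows "skew_rank V A = skew_rank (del_vertex_V V x) (del_vertex_A A x) \<and>
         independence_number V A = independence_number (del_vertex_V V x) (del_vertex_A A x) \<and>
         dim_d V A = dim_d (del_vertex_V V x) (del_vertex_A A x) + 1 \<and>
         lower_optimal (del_vertex_V V x) (del_vertex_A A x) \<and>
         card {C. is_cycle V A C \<and> on_cycle x C} = 1 \<and> \<not> quasi_pendant V A x"
proof -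
  interpret ograph V A by (rule ograph.intro[OF assms(1)])
  obtain C where C: "is_cycle V A C" "on_cycle x C" using assms(4) by blast
  have cyc: "cycle_vertex V A x" by (rule cycle_vertex_if_on_cycle[OF C])
  note tight = lower_optimal_cycle_vertex[OF assms(2,3) cyc]
  have "skew_rank V A = skew_rank (del_vertex_V V x) (del_vertex_A A x)"
    using tight(1) unfolding skew_rank_eq_principal_rank[OF finite_V] skew_rank_del_vertex by simp
  moreover have "independence_number V A = independence_number (del_vertex_V V x) (del_vertex_A A x)"
    using tight(2) unfolding independence_number_del_vertex by simp
  moreover have "dim_d V A = dim_d (del_vertex_V V x) (del_vertex_A A x) + 1"
    using cyclomatic_number_Diff_vertex[OF subset_refl assms(3)] tight(3)
    unfolding dim_d_eq_cyclomatic_number dim_d_del_vertex by simp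
  moreover have "lower_optimal (del_vertex_V V x) (del_vertex_A A x)"
    using tight(4) lower_optimal_del_vertex_iff by simp
  ultimately show ?thesis
    using card_cycles_through[OF assms(2) C] not_quasi_pendant_if_lower_optimal[OF assms(2,3) cyc]
    by blast
qed

end
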